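(* Let $\theta>0$, $\lambda>0$, $\mu>0$ with $\lambda<\mu+1$. For $\alpha\ge 0$, $d\ge 0$ let $$\pi(\alpha,d)=(\theta+\mu)\alpha-\frac{\alpha^2}{2}-\frac{\alpha}{\alpha+d}\,\lambda\alpha\theta-d ,$$ let $\Pi(\alpha;\theta)=\max_{d\ge0}\pi(\alpha,d)$ for $\alpha>0$, and let $\alpha^*(\theta)$ be the maximizer of $\Pi(\cdot;\theta)$ over $\alpha>0$, namely $\alpha^*(\theta)=\mu+\theta(1-\lambda)$ if $\lambda\theta\le1$ and $\alpha^*(\theta)=\theta+\mu+1-2\sqrt{\lambda\theta}$ if $\lambda\theta>1$. Let $\alpha^0=\theta+\mu$ and $\Delta(\theta)=\alpha^0-\alpha^*(\theta)$. Then $$\Delta(\theta)=\begin{cases}\lambda\theta, & \lambda\theta\le 1,\\ 2\sqrt{\lambda\theta}-1, & \lambda\theta>1.\end{cases}$$ Moreover, $\Delta$ is continuously differentiable in $\theta$ at $\theta=1/\lambda$, is increasing in $\lambda$ and in $\theta$, and does not depend on $\mu$.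
   Context: $\alpha$ is AI deployment, $d$ security investment, $\theta$ AI capability, $\lambda$ breach-loss magnitude, $\mu$ organizational readiness. Breach probability is $\alpha/(\alpha+d)$ and breach damage $\lambda\alpha\theta$. $\alpha^0=\theta+\mu$ is the deployment that maximizes $(\theta+\mu)\alpha-\alpha^2/2$ (no-risk benchmark); $\Delta$ is called the security discount. *)

theory Defs
  imports "HOL-Analysis.Analysis"
begin

definition payoff :: "real \<Rightarrow> real \<Rightarrow> real \<Rightarrow> real \<Rightarrow> real \<Rightarrow> real" where
  "payoff theta lam mu alpha d =
     (theta + mu) * alpha - alpha^2 / 2 - alpha / (alpha + d) * (lam * alpha * theta) - d"

definition alpha0 :: "real \<Rightarrow> real \<Rightarrow> real" where
  "alpha0 theta mu = theta + mu"

text \<open>Optimal deployment alpha*(theta), as given explicitly in the statement.\<close>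
definition alpha_star :: "real \<Rightarrow> real \<Rightarrow> real \<Rightarrow> real" where
  "alpha_star lam mu theta =
     (if lam * theta \<le> 1 then mu + theta * (1 - lam)
      else theta + mu + 1 - 2 * sqrt (lam * theta))"

definition Delta :: "real \<Rightarrow> real \<Rightarrow> real \<Rightarrow> real" where
  "Delta lam mu theta = alpha0 theta mu - alpha_star lam mu theta"

end

theory Submission
  imports Defs
begin

(* The discount depends on lam and theta only through the exposure x = lam * theta, and not on mu:
   it is x for x \<le> 1 and 2 sqrt x - 1 beyond.  Both branches have value 1 and slope 1 at x = 1,
   so the glued function has the continuous derivative 1 / sqrt (max 1 x) > 0 and is strictly
   increasing; monotonicity in lam and in theta follows because theta > 0 and lam > 0. *)

definition security_discount :: "real \<Rightarrow> real" where
  "security_discount x = (if x \<le> 1 then x else 2 * sqrt x - 1)"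

lemma Delta_eq_security_discount: "Delta lam mu theta = security_discount (lam * theta)"
  by (simp add: Delta_def alpha0_def alpha_star_def security_discount_def algebra_simps)

lemma security_discount_has_real_derivative:
  "(security_discount has_real_derivative 1 / sqrt (max 1 x)) (at x)"
proof -
  have sqrt_branch: "((\<lambda>x. 2 * sqrt x - 1) has_real_derivative 1 / sqrt x) (at x)" if "x \<ge> 1"
  proof -
    have "((\<lambda>x. 2 * sqrt x - 1) has_real_derivative 2 * (inverse (sqrt x) / 2) - 0) (at x)"
      using that by (intro DERIV_diff DERIV_cmult DERIV_const DERIV_real_sqrt) auto
    then show ?thesis
      by (simp add: field_simps)
  qed
  have "((\<lambda>x. if x \<in> {..1} then x else 2 * sqrt x - 1) has_vector_derivative
          (if x \<in> {..1} then 1 else 1 / sqrt x)) (at x within UNIV)"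
  proof (rule has_vector_derivative_If_within_closures[where f' = "\<lambda>_. 1" and g' = "\<lambda>x. 1 / sqrt x"])
    show "x \<in> {..1} \<union> {1<..}" and "UNIV = {..1::real} \<union> {1<..}"
      by auto
    show "((\<lambda>x. x) has_vector_derivative 1) (at x within {..1} \<union> (closure {..1} \<inter> closure {1<..}))"
      by (rule has_vector_derivative_id)
  next
    assume "x \<in> {1<..} \<union> (closure {..1} \<inter> closure {1<..})"
    then have "x \<ge> 1"
      by auto
    then show "((\<lambda>x. 2 * sqrt x - 1) has_vector_derivative 1 / sqrt x)
                 (at x within {1<..} \<union> (closure {..1} \<inter> closure {1<..}))"
      using sqrt_branch has_real_derivative_iff_has_vector_derivative has_field_derivative_at_within
      by blast
  next
    assume "x \<in> closure {..1}" "x \<in> closure {1<..}"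
    then have "x = 1"
      by auto
    then show "x = 2 * sqrt x - 1" and "1 = 1 / sqrt x"
      by auto
  qed
  moreover have "1 / sqrt (max 1 x) = (if x \<le> 1 then 1 else 1 / sqrt x)"
    by (simp add: max_def)
  ultimately show ?thesis
    unfolding security_discount_def[abs_def] has_real_derivative_iff_has_vector_derivative by simp
qed

lemma strict_mono_security_discount: "strict_mono security_discount"
proof (rule strict_monoI)
  fix a b :: real
  assume "a < b"
  consider "b \<le> 1" | "a \<le> 1" "1 < b" | "1 < a"
    using \<open>a < b\<close> by linarith
  then show "security_discount a < security_discount b"
  proof cases
    case 2
    then have "a < 2 * sqrt b - 1"
      using real_sqrt_gt_1_iff[of b] by linarith
    then show ?thesis
      using 2 by (simp add: security_discount_def)
  qed (use \<open>a < b\<close> in \<open>auto simp: security_discount_def\<close>)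
qed

lemma Delta_has_real_derivative:
  "(Delta lam mu has_real_derivative lam / sqrt (max 1 (lam * t))) (at t)"
proof -
  have "((\<lambda>t. security_discount (lam * t)) has_real_derivative
          1 / sqrt (max 1 (lam * t)) * (lam * 1)) (at t)"
    by (rule DERIV_chain2[OF security_discount_has_real_derivative DERIV_cmult[OF DERIV_ident]])
  then show ?thesis
    by (simp add: Delta_eq_security_discount[abs_def])
qed

lemma deriv_Delta: "deriv (Delta lam mu) = (\<lambda>t. lam / sqrt (max 1 (lam * t)))"
  using Delta_has_real_derivative DERIV_imp_deriv by blast

theorem proposition2:
  fixes theta lam mu :: real
  assumes "theta > 0" and "lam > 0" and "mu > 0" and "lam < mu + 1"
  shows "Delta lam mu theta = (if lam * theta \<le> 1 then lam * theta else 2 * sqrt (lam * theta) - 1)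
    \<and> ((\<exists>e>0. \<forall>t. \<bar>t - 1 / lam\<bar> < e \<longrightarrow> Delta lam mu differentiable (at t))
         \<and> isCont (deriv (Delta lam mu)) (1 / lam))
    \<and> (\<forall>l1 l2. 0 < l1 \<longrightarrow> l1 < l2 \<longrightarrow> l2 < mu + 1 \<longrightarrow> Delta l1 mu theta < Delta l2 mu theta)
    \<and> (\<forall>t1 t2. 0 < t1 \<longrightarrow> t1 < t2 \<longrightarrow> Delta lam mu t1 < Delta lam mu t2)
    \<and> (\<forall>m1 m2. 0 < m1 \<longrightarrow> 0 < m2 \<longrightarrow> lam < m1 + 1 \<longrightarrow> lam < m2 + 1 \<longrightarrow>
           Delta lam m1 theta = Delta lam m2 theta)"
proof -
  have differentiable: "\<exists>e>0. \<forall>t. \<bar>t - 1 / lam\<bar> < e \<longrightarrow> Delta lam mu differentiable (at t)"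
    using Delta_has_real_derivative real_differentiable_def by (intro exI[of _ 1]) auto
  have continuous_deriv: "isCont (deriv (Delta lam mu)) (1 / lam)"
    unfolding deriv_Delta by (intro continuous_intros) auto
  have mono_lam: "Delta l1 mu theta < Delta l2 mu theta" if "l1 < l2" for l1 l2
    using that \<open>theta > 0\<close> strict_mono_security_discount
    by (simp add: Delta_eq_security_discount strict_mono_less)
  have mono_theta: "Delta lam mu t1 < Delta lam mu t2" if "t1 < t2" for t1 t2
    using that \<open>lam > 0\<close> strict_mono_security_discount
    by (simp add: Delta_eq_security_discount strict_mono_less)
  show ?thesis
    using differentiable continuous_deriv mono_lam mono_theta
    by (simp add: Delta_eq_security_discount security_discount_def)
qed

end
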